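(* In $V_q$ one has, for $0\le n\le r-2$, $e_1e_n=-\epsilon_n\epsilon_{n+1}e_{n-1}+e_{n+1}$ (with the convention $e_{-1}=e_{r-1}=0$). Consequently $e_n=P_n(e_1)$ for $0\le n\le r-2$, $P_{r-1}$ is the characteristic polynomial of multiplication by $e_1$ on $V_q$, and $P\mapsto P(e_1)$ induces an algebra isomorphism $\mathbb{Q}[X]/(P_{r-1})\cong V_q$. Moreover $P_n$ is even (resp. odd) when $n$ is even (resp. odd).
   Context: Let $r\ge 3$ and $s$ be coprime odd integers with $0<s<r$, $q=\exp(i\pi s/r)$. For an integer $n$ put $[n]=\frac{q^n-q^{-n}}{q-q^{-1}}$, $[n]!=[n][n-1]\cdots[1]$, and for $1\le n\le r-1$ let $\epsilon_n=\operatorname{sign}[n]=(-1)^{\lfloor ns/r\rfloor}$ (so $\epsilon_1=1$ and $\epsilon_n=\epsilon_{r-n}$); set $\epsilon_0=\epsilon_r=0$. A triple $(i,j,k)\in\{0,\dots,r-2\}^3$ is $r$-admissible if $i\le j+k$, $j\le i+k$, $k\le i+j$, $i+j+k$ is even and $i+j+k\le 2r-4$; for such a triple write $i=b+c$, $j=a+c$, $k=a+b$ and set $\langle i,j,k\rangle=(-1)^{a+b+c}\frac{[a+b+c+1]![a]![b]![c]!}{[a+b]![a+c]![b+c]!}$. Let $V_q$ be the $\mathbb{Q}$-vector space with basis $e_0,\dots,e_{r-2}$, with the symmetric bilinear form $\eta$ for which this basis is orthogonal and $\eta(e_i,e_i)=(-1)^i\epsilon_{i+1}$, and the symmetric trilinear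 form $\omega$ with $\omega(e_i,e_j,e_k)=\operatorname{sign}\langle i,j,k\rangle$ if $(i,j,k)$ is $r$-admissible and $0$ otherwise. The product on $V_q$ is defined by $\eta(x\cdot y,z)=\omega(x,y,z)$, giving a commutative associative unital algebra with unit $e_0$. Define $P_n\in\mathbb{Z}[X]$ by $P_0=1$, $P_1=X$, $P_{n+1}=XP_n+\epsilon_n\epsilon_{n+1}P_{n-1}$ for $1\le n\le r-2$. *)

theory Defs
  imports Complex_Main "HOL-Computational_Algebra.Polynomial" "Jordan_Normal_Form.Char_Poly"
begin

definition qq :: "nat \<Rightarrow> nat \<Rightarrow> complex" where
  "qq r s = exp (\<i> * of_real (pi * real s / real r))"

definition qint :: "nat \<Rightarrow> nat \<Rightarrow> nat \<Rightarrow> complex" where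
  "qint r s n = (qq r s ^ n - inverse (qq r s) ^ n) / (qq r s - inverse (qq r s))"

definition qfact :: "nat \<Rightarrow> nat \<Rightarrow> nat \<Rightarrow> complex" where
  "qfact r s n = (\<Prod>m\<in>{1..n}. qint r s m)"

definition rsign :: "real \<Rightarrow> int" where
  "rsign x = (if x > 0 then 1 else if x < 0 then -1 else 0)"

text \<open>epsilon_n = sign [n] for 1 <= n <= r-1, and epsilon_0 = epsilon_r = 0
  ([n] is real; we take the sign of its real part)\<close>
definition eps :: "nat \<Rightarrow> nat \<Rightarrow> nat \<Rightarrow> int" where
  "eps r s n = (if 1 \<le> n \<and> n \<le> r - 1 then rsign (Re (qint r s n)) else 0)"

definition admissible :: "nat \<Rightarrow> nat \<Rightarrow> nat \<Rightarrow> nat \<Rightarrow> bool" where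
  "admissible r i j k \<longleftrightarrow> i \<le> r - 2 \<and> j \<le> r - 2 \<and> k \<le> r - 2 \<and>
     i \<le> j + k \<and> j \<le> i + k \<and> k \<le> i + j \<and> even (i + j + k) \<and> i + j + k \<le> 2 * r - 4"

text \<open>For admissible (i,j,k): i = b+c, j = a+c, k = a+b.\<close>
definition tri :: "nat \<Rightarrow> nat \<Rightarrow> nat \<Rightarrow> nat \<Rightarrow> nat \<Rightarrow> complex" where
  "tri r s i j k = (let a = (j + k - i) div 2; b = (i + k - j) div 2; c = (i + j - k) div 2 in
     (-1) ^ (a + b + c) * qfact r s (a + b + c + 1) * qfact r s a * qfact r s b * qfact r s c
       / (qfact r s (a + b) * qfact r s (a + c) * qfact r s (b + c)))"

definition omega :: "nat \<Rightarrow> nat \<Rightarrow> nat \<Rightarrow> nat \<Rightarrow> nat \<Rightarrow> rat" where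
  "omega r s i j k = (if admissible r i j k then of_int (rsign (Re (tri r s i j k))) else 0)"

definition eta :: "nat \<Rightarrow> nat \<Rightarrow> nat \<Rightarrow> rat" where
  "eta r s i = (-1) ^ i * of_int (eps r s (i + 1))"

text \<open>Elements of V_q are represented by coordinate functions nat => rat w.r.t.
  the basis e_0, ..., e_(r-2), vanishing outside {0..r-2}.\<close>
definition Vq :: "nat \<Rightarrow> (nat \<Rightarrow> rat) set" where
  "Vq r = {x. \<forall>k. r - 2 < k \<longrightarrow> x k = 0}"

definition ebas :: "nat \<Rightarrow> nat \<Rightarrow> nat \<Rightarrow> rat" where
  "ebas r n = (\<lambda>k. if k = n \<and> n \<le> r - 2 then 1 else 0)"

definition vadd :: "(nat \<Rightarrow> rat) \<Rightarrow> (nat \<Rightarrow> rat) \<Rightarrow> nat \<Rightarrow> rat" where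
  "vadd x y = (\<lambda>k. x k + y k)"

definition vscale :: "rat \<Rightarrow> (nat \<Rightarrow> rat) \<Rightarrow> nat \<Rightarrow> rat" where
  "vscale c x = (\<lambda>k. c * x k)"

text \<open>The product determined by eta(x.y, z) = omega(x, y, z).\<close>
definition vmult :: "nat \<Rightarrow> nat \<Rightarrow> (nat \<Rightarrow> rat) \<Rightarrow> (nat \<Rightarrow> rat) \<Rightarrow> nat \<Rightarrow> rat" where
  "vmult r s x y = (\<lambda>k. if k \<le> r - 2 then
      (\<Sum>i\<le>r - 2. \<Sum>j\<le>r - 2. x i * y j * omega r s i j k) / eta r s k else 0)"

definition vpow :: "nat \<Rightarrow> nat \<Rightarrow> (nat \<Rightarrow> rat) \<Rightarrow> nat \<Rightarrow> nat \<Rightarrow> rat" where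
  "vpow r s x n = (vmult r s x ^^ n) (ebas r 0)"

definition veval :: "nat \<Rightarrow> nat \<Rightarrow> rat poly \<Rightarrow> (nat \<Rightarrow> rat) \<Rightarrow> nat \<Rightarrow> rat" where
  "veval r s p x = (\<lambda>k. \<Sum>m\<le>degree p. coeff p m * vpow r s x m k)"

fun Ppoly :: "nat \<Rightarrow> nat \<Rightarrow> nat \<Rightarrow> int poly" where
  "Ppoly r s 0 = 1"
| "Ppoly r s (Suc 0) = [:0, 1:]"
| "Ppoly r s (Suc (Suc n)) = [:0, 1:] * Ppoly r s (Suc n)
      + Polynomial.smult (eps r s (Suc n) * eps r s (Suc (Suc n))) (Ppoly r s n)"

definition multmat :: "nat \<Rightarrow> nat \<Rightarrow> rat mat" where
  "multmat r s = mat (r - 1) (r - 1) (\<lambda>(k, j). vmult r s (ebas r 1) (ebas r j) k)"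

end

theory Submission
  imports Defs
begin

text \<open>Since \<open>[n] = sin(n\<theta>)/sin \<theta>\<close> with \<open>\<theta> = \<pi>s/r\<close>, its sign is \<open>(-1)^\<lfloor>ns/r\<rfloor>\<close>, so every
  structure constant of \<open>V\<^sub>q\<close> (the coefficient of \<open>e\<^sub>k\<close> in \<open>e\<^sub>i e\<^sub>j\<close>) is an explicit product of such
  signs. These constants satisfy a three-term recurrence in \<open>i\<close>; as an identity between \<open>\<plusminus>1\<close>'s it
  comes down to comparing the carries that occur when the residues of \<open>us, vs, ws\<close> modulo \<open>r\<close> are
  added. The recurrence says that multiplication by \<open>e\<^sub>i\<^sub>+\<^sub>1\<close> is \<open>e\<^sub>1 (e\<^sub>i \<cdot>) + \<epsilon>\<^sub>i\<epsilon>\<^sub>i\<^sub>+\<^sub>1 (e\<^sub>i\<^sub>-\<^sub>1 \<cdot>)\<close>,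
  hence multiplication by \<open>e\<^sub>i\<close> is \<open>P\<^sub>i(e\<^sub>1)\<close>. Applied to \<open>e\<^sub>0\<close> this gives \<open>e\<^sub>i = P\<^sub>i(e\<^sub>1)\<close> and turns the
  product of \<open>V\<^sub>q\<close> into multiplication of polynomials. As \<open>P\<^sub>i\<close> is monic of degree \<open>i\<close>, evaluation at
  \<open>e\<^sub>1\<close> is onto with kernel \<open>(P\<^sub>r\<^sub>-\<^sub>1)\<close>; and \<open>P\<^sub>r\<^sub>-\<^sub>1\<close> is the determinant of the tridiagonal matrix
  \<open>X - e\<^sub>1\<close> by row expansion.\<close>

lemma rsign_mult: "rsign (x * y) = rsign x * rsign y"
  by (auto simp: rsign_def mult_pos_neg mult_neg_pos zero_less_mult_iff mult_less_0_iff)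

lemma rsign_divide: "rsign (x / y) = rsign x * rsign y"
  by (auto simp: rsign_def zero_less_divide_iff divide_less_0_iff)

lemma rsign_minus_one_power: "rsign ((-1) ^ n) = (-1) ^ n"
  by (induction n) (auto simp: rsign_mult rsign_def)

lemma rsign_pos: "0 < x \<Longrightarrow> rsign x = 1"
  by (simp add: rsign_def)

lemma sign_identity_of_pm_one:
  fixes x1 x2 y1 y2 z1 z2 :: int
  assumes "x1 = 1 \<or> x1 = -1" "x2 = 1 \<or> x2 = -1" "y1 = 1 \<or> y1 = -1" "y2 = 1 \<or> y2 = -1"
    "z1 = 1 \<or> z1 = -1" "z2 = 1 \<or> z2 = -1"
    and "y1 * y2 = z1 * z2 \<Longrightarrow> x1 * x2 = y1 * y2"
  shows "x1 * y1 * y2 * z2 * x2 = z2 + y1 * z1 * y2 - x2 * x1 * z1"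
  using assms by auto

lemma nat_of_nat_add_1 [simp]: "nat (int n + 1) = Suc n"
  by simp

lemma half_diff_eq_nat:
  fixes i j k :: nat and A :: int
  assumes "int j + int k - int i = 2 * A" "i \<le> j + k"
  shows "(j + k - i) div 2 = nat A" "0 \<le> A"
proof -
  have "int (j + k - i) = 2 * A" using assms by (simp add: of_nat_diff)
  then show "(j + k - i) div 2 = nat A" "0 \<le> A" by linarith+
qed

lemma two_mult_half_diff:
  fixes i j k :: nat
  assumes "even (i + j + k)"
  shows "2 * ((int j + int k - int i) div 2) = int j + int k - int i"
  by (rule dvd_mult_div_cancel) (use assms in \<open>simp add: even_add, argo\<close>)

lemma det_tridiagonal_recurrence:
  fixes f :: "nat \<Rightarrow> nat \<Rightarrow> 'a::comm_ring_1"
  assumes tri1: "\<And>k j. Suc j < k \<Longrightarrow> f k j = 0" and tri2: "\<And>k j. Suc k < j \<Longrightarrow> f k j = 0"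
  shows "det (mat (Suc (Suc n)) (Suc (Suc n)) (\<lambda>(k,j). f k j)) =
     f (Suc n) (Suc n) * det (mat (Suc n) (Suc n) (\<lambda>(k,j). f k j))
     - f (Suc n) n * f n (Suc n) * det (mat n n (\<lambda>(k,j). f k j))"
proof -
  define M where "M = mat (Suc (Suc n)) (Suc (Suc n)) (\<lambda>(k,j). f k j)"
  have Mc: "M \<in> carrier_mat (Suc (Suc n)) (Suc (Suc n))" by (simp add: M_def)
  define N where "N = mat (Suc n) (Suc n) (\<lambda>(k,j). f k (if j < n then j else Suc j))"
  have Nc: "N \<in> carrier_mat (Suc n) (Suc n)" by (simp add: N_def)
  have d1: "mat_delete M (Suc n) (Suc n) = mat (Suc n) (Suc n) (\<lambda>(k,j). f k j)"
    by (rule eq_matI) (auto simp: mat_delete_def M_def)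
  have d2: "mat_delete M (Suc n) n = N"
    by (rule eq_matI) (auto simp: mat_delete_def M_def N_def)
  have d3: "mat_delete N n n = mat n n (\<lambda>(k,j). f k j)"
    by (rule eq_matI) (auto simp: mat_delete_def N_def)
  have "det N = (\<Sum>i<Suc n. N $$ (i,n) * cofactor N i n)" by (rule laplace_expansion_column[OF Nc]) simp
  also have "\<dots> = (\<Sum>i\<in>{n}. N $$ (i,n) * cofactor N i n)"
    by (rule sum.mono_neutral_right) (auto simp: N_def tri2)
  also have "\<dots> = f n (Suc n) * det (mat n n (\<lambda>(k,j). f k j))"
    by (simp add: N_def cofactor_def d3[symmetric] N_def)
  finally have dN: "det N = f n (Suc n) * det (mat n n (\<lambda>(k,j). f k j))" .
  have "det M = (\<Sum>j<Suc (Suc n). M $$ (Suc n, j) * cofactor M (Suc n) j)"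
    by (rule laplace_expansion_row[OF Mc]) simp
  also have "\<dots> = (\<Sum>j\<in>{n, Suc n}. M $$ (Suc n, j) * cofactor M (Suc n) j)"
    by (rule sum.mono_neutral_right) (auto simp: M_def tri1)
  also have "\<dots> = f (Suc n) n * cofactor M (Suc n) n + f (Suc n) (Suc n) * cofactor M (Suc n) (Suc n)"
    by (simp add: M_def)
  also have "cofactor M (Suc n) (Suc n) = det (mat (Suc n) (Suc n) (\<lambda>(k,j). f k j))"
    by (simp add: cofactor_def d1)
  also have "cofactor M (Suc n) n = - det N"
    by (simp add: cofactor_def d2)
  finally show ?thesis unfolding M_def dN by (simp add: algebra_simps)
qed

lemma Ppoly_parity:
  "(even n \<longrightarrow> odd k \<longrightarrow> coeff (Ppoly r s n) k = 0) \<and> (odd n \<longrightarrow> even k \<longrightarrow> coeff (Ppoly r s n) k = 0)"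
proof (induction r s n arbitrary: k rule: Ppoly.induct)
  case (3 r s n)
  then show ?case by (auto simp: coeff_pCons split: nat.split)
qed (auto simp: coeff_1 coeff_pCons odd_pos split: nat.split)

locale quantum_root =
  fixes r s :: nat
  assumes r_ge_3: "3 \<le> r" and odd_s: "odd s" and coprime_r_s: "coprime r s"
    and s_pos: "0 < s" and s_less_r: "s < r"
begin

section \<open>Signs of quantum integers\<close>

definition theta :: real where "theta = pi * real s / real r"
definition qreal :: "nat \<Rightarrow> real" where "qreal n = sin (real n * theta) / sin theta"
definition sigma :: "nat \<Rightarrow> int" where "sigma n = (-1) ^ (n * s div r)"

lemma sin_theta_pos: "0 < sin theta"
proof (rule sin_gt_zero)
  show "0 < theta" using s_pos r_ge_3 by (simp add: theta_def)
  show "theta < pi" using s_less_r r_ge_3 by (simp add: theta_def field_simps)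
qed

lemma qq_eq_cis: "qq r s = cis theta"
  by (simp add: qq_def cis_conv_exp theta_def mult.commute)

lemma qint_eq_qreal: "qint r s n = complex_of_real (qreal n)"
proof -
  have "cis (real n * theta) - cis (- (real n * theta)) = 2 * \<i> * complex_of_real (sin (real n * theta))"
    "cis theta - cis (- theta) = 2 * \<i> * complex_of_real (sin theta)"
    by (simp_all add: cis.ctr complex_eq_iff)
  then show ?thesis
    using sin_theta_pos by (simp add: qint_def qq_eq_cis DeMoivre qreal_def)
qed

lemma not_dvd_mult_s: "1 \<le> n \<Longrightarrow> n \<le> r - 1 \<Longrightarrow> \<not> r dvd n * s"
  using coprime_r_s by (auto simp: coprime_dvd_mult_left_iff dest: dvd_imp_le)

lemma sin_mult_theta:
  assumes "1 \<le> n" "n \<le> r - 1"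
  shows "sin (real n * theta) = sigma n * sin (pi * real (n * s mod r) / real r)"
    and "0 < sin (pi * real (n * s mod r) / real r)"
proof -
  define m t where "m = n * s div r" and "t = n * s mod r"
  have "real n * theta = pi * (real m * real r + real t) / real r"
    by (simp add: theta_def m_def t_def flip: of_nat_mult of_nat_add)
  also have "\<dots> = real m * pi + pi * real t / real r"
    using r_ge_3 by (simp add: field_simps)
  finally show "sin (real n * theta) = sigma n * sin (pi * real (n * s mod r) / real r)"
    by (simp add: sin_add sigma_def m_def t_def)
  have "t \<noteq> 0"
    using not_dvd_mult_s[OF assms] by (simp add: t_def dvd_eq_mod_eq_0)
  moreover have "t < r" using r_ge_3 by (simp add: t_def)
  ultimately show "0 < sin (pi * real (n * s mod r) / real r)"
    using r_ge_3 by (intro sin_gt_zero) (auto simp: field_simps simp flip: t_def)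
qed

lemma rsign_qreal:
  assumes "1 \<le> n" "n \<le> r - 1"
  shows "rsign (qreal n) = sigma n"
proof -
  have "rsign (qreal n) = rsign ((-1) ^ (n * s div r)) * rsign (sin (pi * real (n * s mod r) / real r))
      * rsign (sin theta)"
    by (simp add: qreal_def sin_mult_theta(1)[OF assms] sigma_def rsign_mult rsign_divide)
  then show ?thesis
    using sin_mult_theta(2)[OF assms] sin_theta_pos by (simp add: rsign_minus_one_power rsign_pos sigma_def)
qed

lemma eps_eq_sigma: "1 \<le> n \<Longrightarrow> n \<le> r - 1 \<Longrightarrow> eps r s n = sigma n"
  by (simp add: eps_def qint_eq_qreal rsign_qreal)

lemma eps_0 [simp]: "eps r s 0 = 0"
  by (simp add: eps_def)

lemma sigma_cases: "sigma n = 1 \<or> sigma n = -1"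
  by (simp add: sigma_def minus_one_power_iff)

lemma sigma_square [simp]: "sigma n * sigma n = 1" "sigma n * (sigma n * z) = z"
  by (simp_all add: sigma_def)

definition qfact_real :: "nat \<Rightarrow> real" where "qfact_real m = (\<Prod>l\<in>{1..m}. qreal l)"
definition sigma_fact :: "nat \<Rightarrow> int" where "sigma_fact m = (\<Prod>l\<in>{1..m}. sigma l)"

lemma sigma_fact_0 [simp]: "sigma_fact 0 = 1"
  by (simp add: sigma_fact_def)

lemma sigma_fact_Suc: "sigma_fact (Suc m) = sigma_fact m * sigma (Suc m)"
  by (simp add: sigma_fact_def prod.cl_ivl_Suc)

lemma sigma_fact_square [simp]: "sigma_fact m * sigma_fact m = 1" "sigma_fact m * (sigma_fact m * z) = z"
proof -
  show "sigma_fact m * sigma_fact m = 1"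
    by (induction m) (simp_all add: sigma_fact_Suc algebra_simps)
  then show "sigma_fact m * (sigma_fact m * z) = z"
    by (simp flip: mult.assoc)
qed

lemma qfact_eq_qfact_real: "qfact r s m = complex_of_real (qfact_real m)"
  by (simp add: qfact_def qfact_real_def qint_eq_qreal)

lemma rsign_qfact_real: "m \<le> r - 1 \<Longrightarrow> rsign (qfact_real m) = sigma_fact m"
proof (induction m)
  case 0
  then show ?case by (simp add: qfact_real_def rsign_def)
next
  case (Suc m)
  have "qfact_real (Suc m) = qfact_real m * qreal (Suc m)"
    by (simp add: qfact_real_def prod.cl_ivl_Suc)
  with Suc show ?case
    by (simp add: rsign_mult rsign_qreal sigma_fact_Suc)
qed

section \<open>The structure constants and their recurrence\<close>

text \<open>For \<open>i = b + c\<close>, \<open>j = a + c\<close>, \<open>k = a + b\<close>, the number \<open>tsign a b c\<close> is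
  \<open>sign \<langle>i,j,k\<rangle> / \<eta>(e\<^sub>k, e\<^sub>k)\<close> with every \<open>\<plusminus>1\<close> factor moved to the numerator; \<open>sconst i j k\<close> is
  the coefficient of \<open>e\<^sub>k\<close> in \<open>e\<^sub>i e\<^sub>j\<close>.\<close>

definition tsign :: "nat \<Rightarrow> nat \<Rightarrow> nat \<Rightarrow> int" where
  "tsign a b c = (-1) ^ c * sigma_fact (a + b + 1) * sigma_fact (a + b + c + 1)
     * sigma_fact a * sigma_fact b * sigma_fact c * sigma_fact (b + c) * sigma_fact (a + c)"

definition sconst :: "nat \<Rightarrow> nat \<Rightarrow> nat \<Rightarrow> int" where
  "sconst i j k = (if admissible r i j k
     then tsign ((j + k - i) div 2) ((i + k - j) div 2) ((i + j - k) div 2) else 0)"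

lemma eta_eq_sigma: "k \<le> r - 2 \<Longrightarrow> eta r s k = (-1) ^ k * of_int (sigma (k + 1))"
  using r_ge_3 by (simp add: eta_def eps_eq_sigma)

lemma omega_div_eta:
  assumes "k \<le> r - 2"
  shows "omega r s i j k / eta r s k = of_int (sconst i j k)"
proof (cases "admissible r i j k")
  case False
  then show ?thesis by (simp add: omega_def sconst_def)
next
  case True
  define a b c where "a = (j + k - i) div 2" and "b = (i + k - j) div 2" and "c = (i + j - k) div 2"
  have "i \<le> j + k" "j \<le> i + k" "k \<le> i + j" "even (i + j + k)" "i + j + k \<le> 2 * r - 4"
    using True by (auto simp: admissible_def)
  then have "2 * a = j + k - i" "2 * b = i + k - j" "2 * c = i + j - k"
    by (simp_all add: a_def b_def c_def even_diff_nat add_ac)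
  with \<open>i + j + k \<le> 2 * r - 4\<close> \<open>k \<le> i + j\<close> \<open>i \<le> j + k\<close> \<open>j \<le> i + k\<close>
  have k_eq: "k = a + b" and top: "a + b + c + 1 \<le> r - 1"
    using r_ge_3 by linarith+
  have "tri r s i j k = complex_of_real ((-1) ^ (a + b + c) * qfact_real (a + b + c + 1)
      * qfact_real a * qfact_real b * qfact_real c
      / (qfact_real (a + b) * qfact_real (a + c) * qfact_real (b + c)))"
    by (simp add: tri_def Let_def qfact_eq_qfact_real flip: a_def b_def c_def)
  then have "rsign (Re (tri r s i j k)) = (-1) ^ (a + b + c) * sigma_fact (a + b + c + 1)
      * sigma_fact a * sigma_fact b * sigma_fact c
      * sigma_fact (a + b) * sigma_fact (a + c) * sigma_fact (b + c)"
    using top by (simp add: rsign_mult rsign_divide rsign_minus_one_power rsign_qfact_real)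
  then have "rsign (Re (tri r s i j k)) * (-1) ^ k * sigma (k + 1) = tsign a b c"
    by (simp add: tsign_def k_eq sigma_fact_Suc power_add algebra_simps)
  then show ?thesis
    using True assms sigma_cases[of "k + 1"]
    by (auto simp: omega_def eta_eq_sigma sconst_def minus_one_power_iff a_def b_def c_def)
qed

text \<open>Write \<open>us = Ur + p\<close>, \<open>vs = Vr + q\<close>, \<open>ws = Wr + t\<close> with \<open>p, q, t < r\<close>. The hypothesis says that
  \<open>p + q + t\<close> overflows \<open>r\<close> an even number of times: either \<open>p + q + t < r\<close>, and then neither
  \<open>p + q\<close> nor \<open>q + t\<close> reaches \<open>r\<close>, or \<open>2r \<le> p + q + t\<close>, and then both do.\<close>

lemma sigma_carry:
  assumes "sigma (u + v + w) * sigma v = sigma u * sigma w"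
  shows "sigma (u + v) * sigma (v + w) = sigma (u + v + w) * sigma v"
proof -
  define U V W where "U = u * s div r" and "V = v * s div r" and "W = w * s div r"
  define p q t where "p = u * s mod r" and "q = v * s mod r" and "t = w * s mod r"
  have r_pos: "0 < r" using r_ge_3 by simp
  have less_r: "p < r" "q < r" "t < r" using r_pos by (simp_all add: p_def q_def t_def)
  have "u * s = U * r + p" "v * s = V * r + q" "w * s = W * r + t"
    by (simp_all add: U_def V_def W_def p_def q_def t_def)
  then have "(u + v) * s = (U + V) * r + (p + q)" "(v + w) * s = (V + W) * r + (q + t)"
    "(u + v + w) * s = (U + V + W) * r + (p + q + t)"
    by (simp_all add: algebra_simps)
  then have div_uv: "(u + v) * s div r = U + V + (p + q) div r"
    and div_vw: "(v + w) * s div r = V + W + (q + t) div r"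
    and div_uvw: "(u + v + w) * s div r = U + V + W + (p + q + t) div r"
    using r_pos by simp_all
  have carry2: "(p + q) div r = (if r \<le> p + q then 1 else 0)" "(q + t) div r = (if r \<le> q + t then 1 else 0)"
    and carry3: "(p + q + t) div r = (if p + q + t < r then 0 else if p + q + t < 2 * r then 1 else 2)"
    using less_r by (auto simp: div_nat_eqI)
  have "even (U + V + W + (p + q + t) div r + V) = even (U + W)"
    using assms by (simp add: sigma_def div_uvw flip: U_def V_def W_def power_add)
      (simp add: minus_one_power_iff split: if_splits)
  then have "even (U + V + (p + q) div r + (V + W + (q + t) div r))
      = even (U + V + W + (p + q + t) div r + V)"
    unfolding carry2 carry3 using less_r by (auto split: if_splits)
  then show ?thesis
    by (simp add: sigma_def div_uv div_vw div_uvw flip: U_def V_def W_def power_add)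
      (simp add: minus_one_power_iff split: if_splits)
qed

lemma sigma_reflect:
  assumes "1 \<le> n" "n \<le> r - 1"
  shows "sigma (r - n) = sigma n"
proof -
  define m t where "m = n * s div r" and "t = n * s mod r"
  have "t \<noteq> 0" using not_dvd_mult_s[OF assms] by (simp add: t_def dvd_eq_mod_eq_0)
  have "t < r" using r_ge_3 by (simp add: t_def)
  have "n * s < s * r" using assms s_pos r_ge_3 by simp
  then have "m < s" unfolding m_def by (rule less_mult_imp_div_less)
  then obtain d where d: "s = m + 1 + d" by (metis add_Suc less_imp_Suc_add Suc_eq_plus1)
  have ns: "n * s = m * r + t" by (simp add: m_def t_def)
  have "int ((r - n) * s) = int r * int s - int n * int s"
    using \<open>n \<le> r - 1\<close> by (simp add: of_nat_diff left_diff_distrib)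
  also have "int n * int s = int m * int r + int t"
    using arg_cong[OF ns, of int] by simp
  also have "int r * int s - (int m * int r + int t) = int (d * r + (r - t))"
    using \<open>t < r\<close> by (simp add: d of_nat_diff algebra_simps)
  finally have "(r - n) * s = d * r + (r - t)" by (simp only: of_nat_eq_iff)
  then have "(r - n) * s div r = d + (r - t) div r"
    using r_ge_3 by (simp only: div_mult_self3[of r])
  also have "(r - t) div r = 0"
    using \<open>t \<noteq> 0\<close> \<open>t < r\<close> by simp
  finally have "(r - n) * s div r = d" by simp
  moreover have "even d = even m" using odd_s d by simp
  ultimately show ?thesis by (simp add: sigma_def m_def minus_one_power_iff)
qed

lemma tsign_zero_Suc: "tsign 0 (b + 1) c * sigma (b + 1) * sigma (b + 2)
    = tsign 0 b c * sigma (b + c + 1) * sigma (b + c + 2)"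
  by (simp add: tsign_def sigma_fact_Suc algebra_simps)

lemma tsign_zero_middle_Suc: "tsign a 0 (c + 1) = - sigma (a + 1) * sigma (a + 2) * tsign (a + 1) 0 c"
  by (simp add: tsign_def sigma_fact_Suc algebra_simps)

lemma tsign_Suc_zero: "tsign a (b + 1) 0 = tsign a b 0"
  by (simp add: tsign_def sigma_fact_Suc algebra_simps)

text \<open>After cancelling the common factor \<open>P * sigma (b + c + 1)\<close>, an identity between four \<open>\<plusminus>1\<close>
  products remains, which holds by \<open>sigma_carry\<close>.\<close>

lemma tsign_Suc_Suc: "tsign a (b + 1) (c + 1) = tsign a b (c + 1)
    - sigma (a + b + 2) * sigma (a + b + 2 + 1) * tsign (a + 1) (b + 1) c
    + sigma (b + c + 1) * sigma (b + c + 2) * tsign (a + 1) b c"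
proof -
  define P where "P = (-1) ^ c * sigma_fact (a + b + 1) * sigma_fact (a + b + c + 2) * sigma_fact a
    * sigma_fact b * sigma_fact c * sigma_fact (b + c) * sigma_fact (a + c + 1)"
  have factored: "tsign a (b + 1) (c + 1) = - P * sigma (b + c + 1) * (sigma (a + b + 2) * sigma (a + b + c + 2 + 1)
      * sigma (b + 1) * sigma (c + 1) * sigma (b + c + 2))"
    "tsign a b (c + 1) = - P * sigma (b + c + 1) * sigma (c + 1)"
    "sigma (a + b + 2) * sigma (a + b + 2 + 1) * tsign (a + 1) (b + 1) c
      = P * sigma (b + c + 1) * (sigma (a + b + c + 2 + 1) * sigma (a + 1) * sigma (b + 1))"
    "sigma (b + c + 1) * sigma (b + c + 2) * tsign (a + 1) b c
      = - P * sigma (b + c + 1) * (- sigma (b + c + 2) * sigma (a + b + 2) * sigma (a + 1))"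
    by (simp_all add: tsign_def P_def sigma_fact_Suc algebra_simps)
  have signs: "sigma (a + b + 2) * sigma (a + b + c + 2 + 1) * sigma (b + 1) * sigma (c + 1) * sigma (b + c + 2)
      = sigma (c + 1) + sigma (a + b + c + 2 + 1) * sigma (a + 1) * sigma (b + 1)
        - sigma (b + c + 2) * sigma (a + b + 2) * sigma (a + 1)"
    using sigma_carry[of "a + 1" "b + 1" "c + 1"]
    by (intro sign_identity_of_pm_one sigma_cases) (simp_all add: ac_simps)
  show ?thesis
    unfolding factored signs by (simp add: algebra_simps)
qed

lemma tsign_Suc_top:
  assumes "a + b + c + 2 + 1 = r"
  shows "tsign a b (c + 1) + sigma (b + c + 1) * sigma (b + c + 2) * tsign (a + 1) b c = 0"
proof -
  have "sigma (b + c + 2) = sigma (a + 1)" "sigma (a + b + 2) = sigma (c + 1)"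
    using sigma_reflect[of "a + 1"] sigma_reflect[of "c + 1"] assms
    by (simp_all add: add.commute[of 2] flip: assms)
  then show ?thesis
    by (simp add: tsign_def sigma_fact_Suc algebra_simps)
qed

text \<open>Extending \<open>tsign\<close> by zero outside the admissible region absorbs the boundary cases of the
  recurrence.\<close>

definition tsign_int :: "int \<Rightarrow> int \<Rightarrow> int \<Rightarrow> int" where
  "tsign_int a b c = (if 0 \<le> a \<and> 0 \<le> b \<and> 0 \<le> c \<and> a + b + c \<le> int r - 2
     then tsign (nat a) (nat b) (nat c) else 0)"

lemma tsign_int_recurrence_interior:
  "tsign_int (int a) (int b + 1) (int c + 1) = tsign_int (int a) (int b) (int c + 1)
    - (if int a + int b + 2 \<le> int r - 2
       then sigma (a + b + 2) * sigma (a + b + 2 + 1) * tsign_int (int a + 1) (int b + 1) (int c) else 0)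
    + sigma (b + c + 1) * sigma (b + c + 2) * tsign_int (int a + 1) (int b) (int c)"
proof -
  consider "a + b + c + 2 \<le> r - 2" | (top) "a + b + c + 2 + 1 = r" | "r \<le> a + b + c + 2"
    by linarith
  then show ?thesis
  proof cases
    case 1
    then show ?thesis
      using r_ge_3 tsign_Suc_Suc[of a b c] by (simp add: tsign_int_def)
  next
    case top
    then show ?thesis
      using tsign_Suc_top[OF top] by (simp add: tsign_int_def)
  qed (simp add: tsign_int_def)
qed

lemma tsign_int_recurrence:
  assumes "0 \<le> A + B" "0 \<le> A + C" "1 \<le> B + C"
    and "B + C \<le> int r - 2" "A + C \<le> int r - 2" "A + B \<le> int r - 2"
  shows "tsign_int A B C = (if 1 \<le> A + B then tsign_int A (B - 1) C else 0)
    - (if A + B + 1 \<le> int r - 2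
       then sigma (nat (A + B + 1)) * sigma (nat (A + B + 2)) * tsign_int (A + 1) B (C - 1) else 0)
    + (if 2 \<le> B + C
       then sigma (nat (B + C - 1)) * sigma (nat (B + C)) * tsign_int (A + 1) (B - 1) (C - 1) else 0)"
proof -
  define a b c where "a = nat A" and "b = nat (B - 1)" and "c = nat (C - 1)"
  consider "B < 0 \<or> C < 0 \<or> A < -1" | (a_neg) "A = -1" "1 \<le> B" "1 \<le> C"
    | (b_zero) "0 \<le> A" "B = 0" "1 \<le> C" | (c_zero) "0 \<le> A" "1 \<le> B" "C = 0"
    | (interior) "0 \<le> A" "1 \<le> B" "1 \<le> C"
    using assms by linarith
  then show ?thesis
  proof cases
    case a_neg
    then have B: "B = int b + 1" and C: "C = int c + 1" by (simp_all add: b_def c_def)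
    have "nat (A + B + 1) = b + 1" "nat (A + B + 2) = b + 2"
      "nat (B + C - 1) = b + c + 1" "nat (B + C) = b + c + 2"
      using a_neg B C by simp_all
    with a_neg assms show ?thesis
      using tsign_zero_Suc[of b c] unfolding B C by (simp add: tsign_int_def mult_ac)
  next
    case b_zero
    then have A: "A = int a" and C: "C = int c + 1" by (simp_all add: a_def c_def)
    have "nat (A + B + 1) = a + 1" "nat (A + B + 2) = a + 2"
      using b_zero A by simp_all
    with b_zero assms show ?thesis
      using tsign_zero_middle_Suc[of a c] unfolding A C by (simp add: tsign_int_def mult_ac)
  next
    case c_zero
    then have "A = int a" "B = int b + 1" by (simp_all add: a_def b_def)
    with c_zero assms show ?thesis
      using tsign_Suc_zero[of a b] by (simp add: tsign_int_def)
  next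
    case interior
    then have A: "A = int a" and B: "B = int b + 1" and C: "C = int c + 1"
      by (simp_all add: a_def b_def c_def)
    have "nat (A + B + 1) = a + b + 2" "nat (A + B + 2) = a + b + 2 + 1"
      "nat (B + C - 1) = b + c + 1" "nat (B + C) = b + c + 2"
      using A B C by simp_all
    with interior show ?thesis
      using tsign_int_recurrence_interior[of a b c] unfolding A B C by simp
  qed (auto simp: tsign_int_def)
qed

lemma sconst_eq_tsign_int:
  assumes "int j + int k - int i = 2 * A" "int i + int k - int j = 2 * B" "int i + int j - int k = 2 * C"
  shows "sconst i j k = tsign_int A B C"
proof (cases "admissible r i j k")
  case True
  then have "i \<le> j + k" "j \<le> i + k" "k \<le> i + j" "i + j + k \<le> 2 * r - 4"
    by (auto simp: admissible_def)
  then have "(j + k - i) div 2 = nat A" "(i + k - j) div 2 = nat B" "(i + j - k) div 2 = nat C"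
    and "0 \<le> A" "0 \<le> B" "0 \<le> C"
    using assms half_diff_eq_nat by (metis add.commute)+
  moreover have "A + B + C \<le> int r - 2"
    using assms \<open>i + j + k \<le> 2 * r - 4\<close> r_ge_3 by linarith
  ultimately show ?thesis
    using True by (simp add: sconst_def tsign_int_def)
next
  case False
  have "int (i + j + k) = 2 * (A + int i)"
    using assms(1) by simp
  then have "even (i + j + k)"
    by (metis dvd_triv_left even_of_nat_iff)
  with False have "\<not> (i \<le> j + k \<and> j \<le> i + k \<and> k \<le> i + j \<and> i + j + k \<le> 2 * r - 4)"
    by (auto simp: admissible_def)
  then have "\<not> (0 \<le> A \<and> 0 \<le> B \<and> 0 \<le> C \<and> A + B + C \<le> int r - 2)"
    using assms r_ge_3 by linarith
  with False show ?thesis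
    by (auto simp: sconst_def tsign_int_def)
qed

lemma sconst_odd: "odd (i + j + k) \<Longrightarrow> sconst i j k = 0"
  by (simp add: sconst_def admissible_def)

text \<open>This is the coordinate form of \<open>e\<^sub>i\<^sub>+\<^sub>1 y = e\<^sub>1 (e\<^sub>i y) + \<epsilon>\<^sub>i\<epsilon>\<^sub>i\<^sub>+\<^sub>1 e\<^sub>i\<^sub>-\<^sub>1 y\<close>.\<close>

lemma sconst_recurrence:
  assumes "i + 1 \<le> r - 2" "j \<le> r - 2" "k \<le> r - 2"
  shows "sconst (i + 1) j k = (if 1 \<le> k then sconst i j (k - 1) else 0)
     - (if k + 1 \<le> r - 2 then sigma (k + 1) * sigma (k + 2) * sconst i j (k + 1) else 0)
     + eps r s i * eps r s (i + 1) * sconst (i - 1) j k"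
proof (cases "even (i + 1 + j + k)")
  case False
  then have "sconst (i + 1) j k = 0" "1 \<le> k \<Longrightarrow> sconst i j (k - 1) = 0" "sconst i j (k + 1) = 0"
    "eps r s i * sconst (i - 1) j k = 0"
    by (cases i; auto intro!: sconst_odd simp: even_add)+
  then show ?thesis by (simp add: mult.assoc mult.left_commute[of "eps r s i"])
next
  case True
  define A B C where "A = (int j + int k - int (i + 1)) div 2"
    and "B = (int (i + 1) + int k - int j) div 2" and "C = (int (i + 1) + int j - int k) div 2"
  have "even (j + (i + 1) + k)" "even (k + (i + 1) + j)"
    using True by (simp_all only: ac_simps)
  with True have hA: "int j + int k - int (i + 1) = 2 * A" and hB: "int (i + 1) + int k - int j = 2 * B"
    and hC: "int (i + 1) + int j - int k = 2 * C"
    unfolding A_def B_def C_def by (simp_all only: two_mult_half_diff)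
  have "sconst (i + 1) j k = tsign_int A B C"
    using hA hB hC by (rule sconst_eq_tsign_int)
  moreover have "sconst i j (k - 1) = tsign_int A (B - 1) C" if "1 \<le> k"
    using that hA hB hC by (intro sconst_eq_tsign_int) (simp_all add: of_nat_diff)
  moreover have "sconst i j (k + 1) = tsign_int (A + 1) B (C - 1)"
    using hA hB hC by (intro sconst_eq_tsign_int) simp_all
  moreover have "sconst (i - 1) j k = tsign_int (A + 1) (B - 1) (C - 1)" if "1 \<le> i"
    using that hA hB hC by (intro sconst_eq_tsign_int) (simp_all add: of_nat_diff)
  moreover have "eps r s i * eps r s (i + 1) = (if 1 \<le> i then sigma i * sigma (i + 1) else 0)"
    using assms r_ge_3 by (cases "i = 0") (auto simp: eps_eq_sigma)
  moreover have "nat (A + B + 1) = k + 1" "nat (A + B + 2) = k + 2"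
    "nat (B + C - 1) = i" "nat (B + C) = i + 1"
    using hA hB hC by linarith+
  moreover have "tsign_int A B C = (if 1 \<le> A + B then tsign_int A (B - 1) C else 0)
    - (if A + B + 1 \<le> int r - 2
       then sigma (nat (A + B + 1)) * sigma (nat (A + B + 2)) * tsign_int (A + 1) B (C - 1) else 0)
    + (if 2 \<le> B + C
       then sigma (nat (B + C - 1)) * sigma (nat (B + C)) * tsign_int (A + 1) (B - 1) (C - 1) else 0)"
    using assms hA hB hC r_ge_3 by (intro tsign_int_recurrence) linarith+
  moreover have "A + B = int k" "B + C = int i + 1"
    using hA hB hC by linarith+
  ultimately show ?thesis
    using assms r_ge_3 by auto
qed

section \<open>Multiplication by \<open>e\<^sub>1\<close>\<close>

lemma vmult_eq_sconst:
  "vmult r s x y k = (if k \<le> r - 2 then (\<Sum>i\<le>r - 2. \<Sum>j\<le>r - 2. x i * y j * of_int (sconst i j k)) else 0)"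
  by (simp add: vmult_def sum_divide_distrib omega_div_eta flip: times_divide_eq_right)

lemma vmult_ebas_left:
  assumes "i \<le> r - 2"
  shows "vmult r s (ebas r i) y k = (if k \<le> r - 2 then (\<Sum>j\<le>r - 2. y j * of_int (sconst i j k)) else 0)"
proof -
  have "(\<Sum>i'\<le>r - 2. \<Sum>j\<le>r - 2. ebas r i i' * y j * of_int (sconst i' j k))
      = (\<Sum>i'\<le>r - 2. if i' = i then (\<Sum>j\<le>r - 2. y j * of_int (sconst i j k)) else 0)"
    by (rule sum.cong) (auto simp: ebas_def assms)
  then show ?thesis
    using assms by (simp add: vmult_eq_sconst sum.delta)
qed

lemma sconst_0_left: "sconst 0 j k = (if j = k \<and> j \<le> r - 2 then 1 else 0)"
proof -
  have "admissible r 0 j k \<longleftrightarrow> j = k \<and> j \<le> r - 2"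
    using r_ge_3 by (auto simp: admissible_def)
  then show ?thesis
    by (simp add: sconst_def tsign_def)
qed

lemma sconst_0_middle: "sconst i 0 k = (if k = i \<and> i \<le> r - 2 then 1 else 0)"
proof -
  have "admissible r i 0 k \<longleftrightarrow> k = i \<and> i \<le> r - 2"
    using r_ge_3 by (auto simp: admissible_def)
  then show ?thesis
    by (simp add: sconst_def tsign_def)
qed

lemma sconst_1_left: "sconst (Suc 0) j k = (if k = j + 1 \<and> j + 1 \<le> r - 2 then 1 else 0)
   - (if 1 \<le> j \<and> k + 1 = j \<and> j \<le> r - 2 then sigma j * sigma (j + 1) else 0)"
proof -
  consider "k = j + 1" | "1 \<le> j" "k + 1 = j" | "k \<noteq> j + 1" "k + 1 \<noteq> j"
    by linarith
  then show ?thesis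
  proof cases
    case 1
    have "admissible r 1 j k = (j + 1 \<le> r - 2)"
      using 1 r_ge_3 by (auto simp: admissible_def)
    moreover have "tsign j 1 0 = 1"
      by (simp add: tsign_def sigma_fact_Suc algebra_simps)
    ultimately show ?thesis
      using 1 by (simp add: sconst_def)
  next
    case 2
    then obtain m where m: "j = m + 1" by (metis add.commute le_Suc_ex)
    have "admissible r 1 j k = (j \<le> r - 2)"
      using 2 r_ge_3 by (auto simp: admissible_def)
    moreover have "(j + k - 1) div 2 = m" "(1 + k - j) div 2 = 0" "(1 + j - k) div 2 = 1"
      using 2 m by auto
    moreover have "tsign m 0 1 = - sigma (m + 1) * sigma (m + 2)"
      by (simp add: tsign_def sigma_fact_Suc algebra_simps)
    ultimately show ?thesis
      using 2 m by (simp add: sconst_def)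
  next
    case 3
    then have "\<not> admissible r 1 j k"
      by (cases "k = j") (auto simp: admissible_def)
    with 3 show ?thesis
      by (simp add: sconst_def)
  qed
qed

abbreviation mult_e1 :: "(nat \<Rightarrow> rat) \<Rightarrow> nat \<Rightarrow> rat" where
  "mult_e1 \<equiv> vmult r s (ebas r (Suc 0))"

lemma mult_e1_apply: "mult_e1 y k = (if k \<le> r - 2 then (if 1 \<le> k then y (k - 1) else 0)
    - (if k + 1 \<le> r - 2 then of_int (sigma (k + 1) * sigma (k + 2)) * y (k + 1) else 0) else 0)"
proof (cases "k \<le> r - 2")
  case True
  have "(\<Sum>j\<le>r - 2. y j * of_int (sconst 1 j k))
      = (\<Sum>j\<le>r - 2. (if 1 \<le> k then (if j = k - 1 then y j else 0) else 0)
        - (if j = k + 1 then of_int (sigma (k + 1) * sigma (k + 2)) * y j else 0))"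
    using True by (intro sum.cong) (auto simp: sconst_1_left)
  also have "\<dots> = (if 1 \<le> k then y (k - 1) else 0)
      - (if k + 1 \<le> r - 2 then of_int (sigma (k + 1) * sigma (k + 2)) * y (k + 1) else 0)"
    using True by (auto simp: sum_subtractf sum.delta')
  finally show ?thesis
    using True r_ge_3 by (simp add: vmult_ebas_left)
qed (use r_ge_3 in \<open>simp add: vmult_ebas_left\<close>)

lemma mult_e1_ebas:
  assumes "n \<le> r - 2"
  shows "mult_e1 (ebas r n) = vadd (if n = 0 then (\<lambda>_. 0)
      else vscale (- of_int (eps r s n * eps r s (n + 1))) (ebas r (n - 1))) (ebas r (n + 1))"
proof
  fix k
  have "n \<noteq> 0 \<Longrightarrow> eps r s n * eps r s (n + 1) = sigma n * sigma (n + 1)"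
    using assms r_ge_3 by (simp add: eps_eq_sigma)
  then show "mult_e1 (ebas r n) k = vadd (if n = 0 then (\<lambda>_. 0)
      else vscale (- of_int (eps r s n * eps r s (n + 1))) (ebas r (n - 1))) (ebas r (n + 1)) k"
    unfolding mult_e1_apply using assms
    by (cases "k = n + 1"; cases "k + 1 = n") (auto simp: vadd_def vscale_def ebas_def)
qed

lemma mult_e1_sum: "mult_e1 (\<lambda>k. \<Sum>i\<in>A. c i * f i k) = (\<lambda>k. \<Sum>i\<in>A. c i * mult_e1 (f i) k)"
  by (rule ext) (simp add: mult_e1_apply sum_distrib_left sum_subtractf algebra_simps)

lemma mult_e1_zero: "mult_e1 (\<lambda>k. 0) = (\<lambda>k. 0)"
  by (rule ext) (simp add: mult_e1_apply)

lemma mult_e1_in_Vq: "mult_e1 y \<in> Vq r"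
  by (simp add: Vq_def mult_e1_apply)

lemma vmult_ebas_recurrence:
  assumes "i + 1 \<le> r - 2"
  shows "vmult r s (ebas r (i + 1)) y = (\<lambda>k. mult_e1 (vmult r s (ebas r i) y) k
          + of_int (eps r s i * eps r s (i + 1)) * vmult r s (ebas r (i - 1)) y k)"
proof
  fix k
  show "vmult r s (ebas r (i + 1)) y k = mult_e1 (vmult r s (ebas r i) y) k
          + of_int (eps r s i * eps r s (i + 1)) * vmult r s (ebas r (i - 1)) y k"
  proof (cases "k \<le> r - 2")
    case False
    with assms show ?thesis by (simp add: vmult_ebas_left mult_e1_apply)
  next
    case True
    have "vmult r s (ebas r (i + 1)) y k = (\<Sum>j\<le>r - 2. y j * of_int (sconst (i + 1) j k))"
      using assms True by (simp add: vmult_ebas_left)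
    also have "\<dots> = (\<Sum>j\<le>r - 2. y j *
        ((if 1 \<le> k then of_int (sconst i j (k - 1)) else 0)
        - (if k + 1 \<le> r - 2 then of_int (sigma (k + 1) * sigma (k + 2)) * of_int (sconst i j (k + 1)) else 0)
        + of_int (eps r s i * eps r s (i + 1)) * of_int (sconst (i - 1) j k)))"
    proof (rule sum.cong)
      fix j
      assume "j \<in> {..r - 2}"
      then show "y j * of_int (sconst (i + 1) j k) = y j *
        ((if 1 \<le> k then of_int (sconst i j (k - 1)) else 0)
        - (if k + 1 \<le> r - 2 then of_int (sigma (k + 1) * sigma (k + 2)) * of_int (sconst i j (k + 1)) else 0)
        + of_int (eps r s i * eps r s (i + 1)) * of_int (sconst (i - 1) j k))"
        using sconst_recurrence[OF assms _ True, of j] by simp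
    qed simp
    also have "\<dots> = mult_e1 (vmult r s (ebas r i) y) k
          + of_int (eps r s i * eps r s (i + 1)) * vmult r s (ebas r (i - 1)) y k"
      using assms True
      by (cases "1 \<le> k"; cases "k + 1 \<le> r - 2") (simp_all add: mult_e1_apply vmult_ebas_left
          sum_distrib_left sum.distrib sum_subtractf algebra_simps)
    finally show ?thesis .
  qed
qed

section \<open>Polynomials in \<open>e\<^sub>1\<close>\<close>

definition poly_e1 :: "rat poly \<Rightarrow> (nat \<Rightarrow> rat) \<Rightarrow> nat \<Rightarrow> rat" where
  "poly_e1 p y = (\<lambda>k. \<Sum>m\<le>degree p. coeff p m * (mult_e1 ^^ m) y k)"

lemma veval_eq_poly_e1: "veval r s p (ebas r 1) = poly_e1 p (ebas r 0)"
  by (simp add: veval_def vpow_def poly_e1_def)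

lemma poly_e1_degree_bound:
  assumes "degree p \<le> n"
  shows "poly_e1 p y = (\<lambda>k. \<Sum>m\<le>n. coeff p m * (mult_e1 ^^ m) y k)"
  unfolding poly_e1_def
  by (rule ext, rule sum.mono_neutral_left) (use assms in \<open>auto simp: coeff_eq_0\<close>)

lemma poly_e1_0 [simp]: "poly_e1 0 y = (\<lambda>k. 0)"
  by (simp add: poly_e1_def)

lemma poly_e1_pCons: "poly_e1 (pCons a p) y = (\<lambda>k. a * y k + mult_e1 (poly_e1 p y) k)"
proof -
  have "poly_e1 (pCons a p) y
      = (\<lambda>k. \<Sum>m\<le>Suc (degree p). coeff (pCons a p) m * (mult_e1 ^^ m) y k)"
    by (rule poly_e1_degree_bound) (simp add: degree_pCons_le)
  also have "\<dots> = (\<lambda>k. a * y k + (\<Sum>m\<le>degree p. coeff p m * mult_e1 ((mult_e1 ^^ m) y) k))"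
    by (rule ext) (simp only: sum.atMost_Suc_shift coeff_pCons_0 coeff_pCons_Suc funpow.simps
        comp_apply id_apply)
  also have "\<dots> = (\<lambda>k. a * y k + mult_e1 (poly_e1 p y) k)"
    by (simp add: poly_e1_def mult_e1_sum)
  finally show ?thesis .
qed

lemma poly_e1_add: "poly_e1 (p + q) y = (\<lambda>k. poly_e1 p y k + poly_e1 q y k)"
proof -
  define n where "n = degree p + degree q"
  have "degree (p + q) \<le> n" "degree p \<le> n" "degree q \<le> n"
    by (auto simp: n_def intro: order.trans[OF degree_add_le_max])
  then show ?thesis
    by (simp add: poly_e1_degree_bound[of _ n] algebra_simps sum.distrib)
qed

lemma poly_e1_smult: "poly_e1 (Polynomial.smult c p) y = (\<lambda>k. c * poly_e1 p y k)"
  by (simp add: poly_e1_degree_bound[of _ "degree p"] sum_distrib_left algebra_simps)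

lemma poly_e1_sum_right: "poly_e1 p (\<lambda>k. \<Sum>i\<in>A. c i * f i k) = (\<lambda>k. \<Sum>i\<in>A. c i * poly_e1 p (f i) k)"
proof (induction p)
  case (pCons a p)
  show ?case
    unfolding poly_e1_pCons pCons.IH mult_e1_sum
    by (simp add: algebra_simps sum.distrib sum_distrib_left)
qed simp

lemma poly_e1_zero_right: "poly_e1 p (\<lambda>k. 0) = (\<lambda>k. 0)"
  using poly_e1_sum_right[where A = "{}"] by simp

lemma poly_e1_mult: "poly_e1 (p * q) y = poly_e1 p (poly_e1 q y)"
proof (induction p)
  case (pCons a p)
  have "poly_e1 (pCons a p * q) y = poly_e1 (Polynomial.smult a q + pCons 0 (p * q)) y"
    by simp
  also have "\<dots> = poly_e1 (pCons a p) (poly_e1 q y)"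
    by (simp add: poly_e1_add poly_e1_smult poly_e1_pCons pCons.IH)
  finally show ?case .
qed simp

lemma poly_e1_1: "poly_e1 1 y = y"
  by (simp add: one_pCons poly_e1_pCons mult_e1_zero)

lemma poly_e1_pCons_0: "poly_e1 (pCons 0 p) y = mult_e1 (poly_e1 p y)"
  by (simp add: poly_e1_pCons)

lemma poly_e1_in_Vq: "y \<in> Vq r \<Longrightarrow> poly_e1 p y \<in> Vq r"
proof -
  assume "y \<in> Vq r"
  then have "(mult_e1 ^^ m) y \<in> Vq r" for m
    by (induction m) (simp_all add: mult_e1_in_Vq)
  then show ?thesis
    by (auto simp: Vq_def poly_e1_def)
qed

definition Pq :: "nat \<Rightarrow> rat poly" where "Pq n = map_poly of_int (Ppoly r s n)"

lemma Pq_0: "Pq 0 = 1"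
  by (simp add: Pq_def)

lemma Pq_1: "Pq (Suc 0) = [:0, 1:]"
  by (simp add: Pq_def map_poly_pCons)

lemma Pq_Suc_Suc: "Pq (Suc (Suc n)) = [:0, 1:] * Pq (Suc n)
    + Polynomial.smult (of_int (eps r s (Suc n) * eps r s (Suc (Suc n)))) (Pq n)"
  by (intro poly_eqI) (simp add: Pq_def coeff_map_poly coeff_pCons split: nat.split)

lemma vmult_ebas_0: "y \<in> Vq r \<Longrightarrow> vmult r s (ebas r 0) y = y"
  by (rule ext) (auto simp: vmult_ebas_left sconst_0_left Vq_def if_distrib cong: if_cong)

lemma vmult_ebas_eq_poly_e1:
  assumes "y \<in> Vq r"
  shows "i \<le> r - 2 \<Longrightarrow> vmult r s (ebas r i) y = poly_e1 (Pq i) y"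
proof (induction i rule: induct_nat_012)
  case 0
  then show ?case using assms by (simp add: vmult_ebas_0 Pq_0 poly_e1_1)
next
  case 1
  then show ?case by (simp add: Pq_1 poly_e1_pCons_0 poly_e1_1[unfolded one_pCons])
next
  case (ge2 n)
  then show ?case
    using vmult_ebas_recurrence[of "Suc n" y]
    by (simp add: Pq_Suc_Suc poly_e1_add poly_e1_smult poly_e1_pCons_0)
qed

lemma ebas_in_Vq: "ebas r n \<in> Vq r"
  by (simp add: Vq_def ebas_def)

lemma sum_ebas_mult: "(\<Sum>j\<le>r - 2. ebas r i j * c j) = (if i \<le> r - 2 then c i else 0)"
proof -
  have "ebas r i j * c j = (if j = i then (if i \<le> r - 2 then c i else 0) else 0)" for j
    by (simp add: ebas_def)
  then show ?thesis by simp
qed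

lemma sum_mult_ebas: "(\<Sum>i\<le>r - 2. x i * ebas r i k) = (if k \<le> r - 2 then x k else 0)"
proof -
  have "x i * ebas r i k = (if i = k then (if k \<le> r - 2 then x k else 0) else 0)" for i
    by (auto simp: ebas_def)
  then show ?thesis by simp
qed

lemma poly_e1_Pq_ebas_0:
  assumes "n \<le> r - 2"
  shows "poly_e1 (Pq n) (ebas r 0) = ebas r n"
proof -
  have "vmult r s (ebas r n) (ebas r 0) = ebas r n"
  proof
    fix k
    show "vmult r s (ebas r n) (ebas r 0) k = ebas r n k"
      unfolding vmult_ebas_left[OF assms] using assms by (simp add: sum_ebas_mult sconst_0_middle) (simp add: ebas_def)
  qed
  then show ?thesis
    using vmult_ebas_eq_poly_e1[OF ebas_in_Vq assms] by simp
qed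

lemma Vq_eq_sum_ebas: "x \<in> Vq r \<Longrightarrow> x = (\<lambda>k. \<Sum>i\<le>r - 2. x i * ebas r i k)"
  by (rule ext) (simp add: Vq_def sum_mult_ebas)

lemma vmult_eq_sum_ebas_left: "vmult r s x y = (\<lambda>k. \<Sum>i\<le>r - 2. x i * vmult r s (ebas r i) y k)"
  by (rule ext) (simp add: vmult_eq_sconst[of x] vmult_ebas_left sum_distrib_left mult.assoc)

text \<open>Both factors are polynomials in \<open>e\<^sub>1\<close> applied to \<open>e\<^sub>0\<close>, and \<open>e\<^sub>i\<close> acts as \<open>Pq i\<close> evaluated at
  \<open>e\<^sub>1\<close>, so the bilinear product becomes composition of polynomial actions.\<close>

lemma poly_e1_mult_ebas_0:
  "poly_e1 (p * q) (ebas r 0) = vmult r s (poly_e1 p (ebas r 0)) (poly_e1 q (ebas r 0))"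
proof -
  define u w where "u = poly_e1 p (ebas r 0)" and "w = poly_e1 q (ebas r 0)"
  have "u \<in> Vq r" "w \<in> Vq r"
    using poly_e1_in_Vq ebas_in_Vq by (simp_all add: u_def w_def)
  have ebas_w: "vmult r s (ebas r i) w = poly_e1 q (ebas r i)" if "i \<le> r - 2" for i
  proof -
    have "vmult r s (ebas r i) w = poly_e1 (Pq i * q) (ebas r 0)"
      using vmult_ebas_eq_poly_e1[OF \<open>w \<in> Vq r\<close> that] by (simp add: w_def poly_e1_mult)
    also have "\<dots> = poly_e1 (q * Pq i) (ebas r 0)"
      by (simp add: mult.commute)
    also have "\<dots> = poly_e1 q (ebas r i)"
      by (simp add: poly_e1_mult poly_e1_Pq_ebas_0 that)
    finally show ?thesis .
  qed
  have "vmult r s u w = (\<lambda>k. \<Sum>i\<le>r - 2. u i * poly_e1 q (ebas r i) k)"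
    by (simp add: vmult_eq_sum_ebas_left[of u] ebas_w)
  also have "\<dots> = poly_e1 q u"
    by (subst (2) Vq_eq_sum_ebas[OF \<open>u \<in> Vq r\<close>]) (simp add: poly_e1_sum_right)
  also have "\<dots> = poly_e1 (p * q) (ebas r 0)"
    by (simp add: u_def mult.commute flip: poly_e1_mult)
  finally show ?thesis by (simp add: u_def w_def)
qed

lemma poly_e1_sum: "poly_e1 (\<Sum>i\<in>A. f i) y = (\<lambda>k. \<Sum>i\<in>A. poly_e1 (f i) y k)"
  by (induction A rule: infinite_finite_induct) (simp_all add: poly_e1_add)

lemma range_poly_e1_ebas_0: "range (\<lambda>p. poly_e1 p (ebas r 0)) = Vq r"
proof
  show "range (\<lambda>p. poly_e1 p (ebas r 0)) \<subseteq> Vq r"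
    using poly_e1_in_Vq ebas_in_Vq by auto
next
  show "Vq r \<subseteq> range (\<lambda>p. poly_e1 p (ebas r 0))"
  proof
    fix x
    assume "x \<in> Vq r"
    have "poly_e1 (\<Sum>i\<le>r - 2. Polynomial.smult (x i) (Pq i)) (ebas r 0) = x"
      using Vq_eq_sum_ebas[OF \<open>x \<in> Vq r\<close>] by (simp add: poly_e1_sum poly_e1_smult poly_e1_Pq_ebas_0)
    then show "x \<in> range (\<lambda>p. poly_e1 p (ebas r 0))"
      by (metis rangeI)
  qed
qed

lemma degree_Pq: "degree (Pq n) = n" and coeff_Pq_degree: "coeff (Pq n) n = 1"
proof -
  have "degree (Pq n) = n \<and> coeff (Pq n) n = 1"
  proof (induction n rule: induct_nat_012)
    case (ge2 n)
    define c where "c = rat_of_int (eps r s (Suc n) * eps r s (Suc (Suc n)))"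
    have Pq_eq: "Pq (Suc (Suc n)) = pCons 0 (Pq (Suc n)) + Polynomial.smult c (Pq n)"
      by (simp add: Pq_Suc_Suc c_def)
    have nonzero: "Pq (Suc n) \<noteq> 0" using ge2 by auto
    with ge2 have "degree (pCons 0 (Pq (Suc n))) = Suc (Suc n)" by simp
    moreover have "degree (Polynomial.smult c (Pq n)) \<le> n"
      using ge2 degree_smult_le[of c "Pq n"] by simp
    ultimately have "degree (Polynomial.smult c (Pq n)) < degree (pCons 0 (Pq (Suc n)))"
      by simp
    then show ?case
      unfolding Pq_eq using ge2 nonzero by (simp add: degree_add_eq_left coeff_eq_0)
  qed (simp_all add: Pq_0 Pq_1)
  then show "degree (Pq n) = n" "coeff (Pq n) n = 1" by simp_all
qed

lemma Pq_nonzero: "Pq n \<noteq> 0"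
  using coeff_Pq_degree[of n] by auto

text \<open>Since \<open>Pq d\<close> is monic of degree \<open>d\<close> and maps \<open>e\<^sub>0\<close> to \<open>e\<^sub>d\<close>, the coordinates of
  \<open>p(e\<^sub>1) e\<^sub>0\<close> are triangular in the coefficients of \<open>p\<close>.\<close>

lemma poly_e1_ebas_0_top_coeff:
  "degree p \<le> d \<Longrightarrow> d \<le> r - 2 \<Longrightarrow>
    (\<forall>k>d. poly_e1 p (ebas r 0) k = 0) \<and> poly_e1 p (ebas r 0) d = coeff p d"
proof (induction d arbitrary: p)
  case 0
  then obtain c where "p = [:c:]" by (metis degree0_coeffs le_zero_eq)
  then show ?case by (simp add: poly_e1_pCons mult_e1_zero) (simp add: ebas_def)
next
  case (Suc d)
  define c where "c = coeff p (Suc d)"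
  define p' where "p' = p - Polynomial.smult c (Pq (Suc d))"
  have "degree p' \<le> d"
  proof (rule degree_le, intro allI impI)
    fix i
    assume "d < i"
    then consider "i = Suc d" | "Suc d < i" by linarith
    then show "coeff p' i = 0"
      by cases (use Suc.prems degree_Pq[of "Suc d"] in \<open>simp_all add: p'_def c_def coeff_Pq_degree coeff_eq_0\<close>)
  qed
  then have IH: "(\<forall>k>d. poly_e1 p' (ebas r 0) k = 0) \<and> poly_e1 p' (ebas r 0) d = coeff p' d"
    using Suc.prems by (intro Suc.IH) auto
  have "p = p' + Polynomial.smult c (Pq (Suc d))" by (simp add: p'_def)
  then have "poly_e1 p (ebas r 0) = (\<lambda>k. poly_e1 p' (ebas r 0) k + c * ebas r (Suc d) k)"
    using Suc.prems by (simp add: poly_e1_add poly_e1_smult poly_e1_Pq_ebas_0)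
  then show ?case
    using IH Suc.prems by (simp add: ebas_def c_def)
qed

lemma poly_e1_ebas_0_eq_0_low_degree:
  assumes "degree p \<le> r - 2" "poly_e1 p (ebas r 0) = (\<lambda>k. 0)"
  shows "p = 0"
proof -
  have "coeff p (degree p) = 0"
    using poly_e1_ebas_0_top_coeff[OF order.refl assms(1)] assms(2) by simp
  then show ?thesis by simp
qed

lemma poly_e1_Pq_top: "poly_e1 (Pq (r - 1)) (ebas r 0) = (\<lambda>k. 0)"
proof -
  define m where "m = r - 3"
  have "r - 1 = Suc (Suc m)" "r - 2 = Suc m" using r_ge_3 by (auto simp: m_def)
  moreover have "ebas r (Suc (Suc m)) = (\<lambda>k. 0)" using \<open>r - 2 = Suc m\<close> by (auto simp: ebas_def)
  ultimately show ?thesis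
    using mult_e1_ebas[of "Suc m"] poly_e1_Pq_ebas_0[of "Suc m"] poly_e1_Pq_ebas_0[of m]
    by (simp add: Pq_Suc_Suc poly_e1_add poly_e1_smult poly_e1_pCons_0 vadd_def vscale_def)
qed

lemma poly_e1_ebas_0_eq_0_iff: "poly_e1 p (ebas r 0) = (\<lambda>_. 0) \<longleftrightarrow> Pq (r - 1) dvd p"
proof
  assume "Pq (r - 1) dvd p"
  then obtain h where "p = Pq (r - 1) * h" by (rule dvdE)
  then have "p = h * Pq (r - 1)" by (simp add: mult.commute)
  then show "poly_e1 p (ebas r 0) = (\<lambda>_. 0)"
    by (simp only: poly_e1_mult poly_e1_Pq_top poly_e1_zero_right)
next
  assume p: "poly_e1 p (ebas r 0) = (\<lambda>_. 0)"
  define Q where "Q = Pq (r - 1)"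
  have "poly_e1 (p mod Q) (ebas r 0) = poly_e1 (p div Q * Q + p mod Q) (ebas r 0)"
    by (simp only: poly_e1_add poly_e1_mult Q_def poly_e1_Pq_top poly_e1_zero_right) simp
  also have "\<dots> = (\<lambda>_. 0)"
    using p by simp
  finally have "poly_e1 (p mod Q) (ebas r 0) = (\<lambda>_. 0)" .
  moreover have "p mod Q \<noteq> 0 \<Longrightarrow> degree (p mod Q) \<le> r - 2"
    using degree_mod_less'[OF Pq_nonzero, of p "r - 1"] r_ge_3 by (simp add: Q_def degree_Pq)
  ultimately have "p mod Q = 0"
    using poly_e1_ebas_0_eq_0_low_degree by blast
  then show "Pq (r - 1) dvd p" by (simp add: Q_def mod_eq_0_iff_dvd)
qed

section \<open>The characteristic polynomial\<close>

definition mult_e1_entry :: "nat \<Rightarrow> nat \<Rightarrow> rat" where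
  "mult_e1_entry k j = (if k = j + 1 then 1 else 0)
     - (if j = k + 1 then of_int (sigma (k + 1) * sigma (k + 2)) else 0)"

lemma multmat_eq: "multmat r s = mat (r - 1) (r - 1) (\<lambda>(k, j). mult_e1_entry k j)"
proof (rule eq_matI)
  fix k j
  assume "k < dim_row (mat (r - 1) (r - 1) (\<lambda>(k, j). mult_e1_entry k j))"
    and "j < dim_col (mat (r - 1) (r - 1) (\<lambda>(k, j). mult_e1_entry k j))"
  then have "k \<le> r - 2" "j \<le> r - 2" "k < r - 1" "j < r - 1" by auto
  then show "multmat r s $$ (k, j) = mat (r - 1) (r - 1) (\<lambda>(k, j). mult_e1_entry k j) $$ (k, j)"
    unfolding multmat_def by (simp add: mult_e1_apply) (auto simp: ebas_def mult_e1_entry_def)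
qed (simp_all add: multmat_def)

definition char_entry :: "nat \<Rightarrow> nat \<Rightarrow> rat poly" where
  "char_entry k j = (if k = j then [:0, 1:] else 0) + [:- mult_e1_entry k j:]"

lemma char_poly_matrix_multmat:
  "char_poly_matrix (multmat r s) = mat (r - 1) (r - 1) (\<lambda>(k, j). char_entry k j)"
  unfolding multmat_eq char_poly_matrix_def by (rule eq_matI) (auto simp: char_entry_def)

lemma det_char_entry: "m \<le> r - 1 \<Longrightarrow> det (mat m m (\<lambda>(k, j). char_entry k j)) = Pq m"
proof (induction m rule: induct_nat_012)
  case 0
  then show ?case by (simp add: Pq_0)
next
  case 1
  have "det (mat 1 1 (\<lambda>(k, j). char_entry k j)) = char_entry 0 0"
    by (subst det_single) auto
  then show ?case by (simp add: char_entry_def mult_e1_entry_def Pq_1)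
next
  case (ge2 m)
  have "eps r s (Suc m) * eps r s (Suc (Suc m)) = sigma (Suc m) * sigma (Suc (Suc m))"
    using ge2.prems by (simp add: eps_eq_sigma)
  moreover have "det (mat (Suc (Suc m)) (Suc (Suc m)) (\<lambda>(k, j). char_entry k j))
      = char_entry (Suc m) (Suc m) * det (mat (Suc m) (Suc m) (\<lambda>(k, j). char_entry k j))
        - char_entry (Suc m) m * char_entry m (Suc m) * det (mat m m (\<lambda>(k, j). char_entry k j))"
    by (rule det_tridiagonal_recurrence) (simp_all add: char_entry_def mult_e1_entry_def)
  ultimately show ?case
    using ge2 by (simp add: Pq_Suc_Suc char_entry_def mult_e1_entry_def)
qed

lemma char_poly_multmat: "char_poly (multmat r s) = Pq (r - 1)"
  unfolding char_poly_def char_poly_matrix_multmat by (simp add: det_char_entry)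

end

theorem mainTheorem3:
  fixes r s :: nat
  assumes "3 \<le> r" "odd r" "odd s" "coprime r s" "0 < s" "s < r"
  shows
    "(\<forall>n \<le> r - 2. vmult r s (ebas r 1) (ebas r n) =
        vadd (if n = 0 then (\<lambda>_. 0)
              else vscale (- of_int (eps r s n * eps r s (n + 1))) (ebas r (n - 1)))
             (ebas r (n + 1)))
   \<and> (\<forall>n \<le> r - 2. ebas r n = veval r s (map_poly of_int (Ppoly r s n)) (ebas r 1))
   \<and> char_poly (multmat r s) = map_poly of_int (Ppoly r s (r - 1))
   \<and> (\<forall>p q. veval r s (p * q) (ebas r 1) = vmult r s (veval r s p (ebas r 1)) (veval r s q (ebas r 1)))
   \<and> (\<forall>p q. veval r s (p + q) (ebas r 1) = vadd (veval r s p (ebas r 1)) (veval r s q (ebas r 1)))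
   \<and> (\<forall>c p. veval r s (Polynomial.smult c p) (ebas r 1) = vscale c (veval r s p (ebas r 1)))
   \<and> veval r s 1 (ebas r 1) = ebas r 0
   \<and> (\<lambda>p. veval r s p (ebas r 1)) ` UNIV = Vq r
   \<and> (\<forall>p. veval r s p (ebas r 1) = (\<lambda>_. 0) \<longleftrightarrow> map_poly of_int (Ppoly r s (r - 1)) dvd p)
   \<and> (\<forall>n \<le> r - 1. \<forall>k. (even n \<longrightarrow> odd k \<longrightarrow> coeff (Ppoly r s n) k = 0)
                      \<and> (odd n \<longrightarrow> even k \<longrightarrow> coeff (Ppoly r s n) k = 0))"
proof -
  interpret quantum_root r s
    using assms by unfold_locales auto
  show ?thesis
    unfolding veval_eq_poly_e1 Pq_def[symmetric]
    using mult_e1_ebas poly_e1_Pq_ebas_0 char_poly_multmat poly_e1_mult_ebas_0 poly_e1_1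
      range_poly_e1_ebas_0 poly_e1_ebas_0_eq_0_iff Ppoly_parity
    by (simp add: poly_e1_add poly_e1_smult vadd_def vscale_def)
qed

end
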